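(* Let $G=(V,E)$ be a finite graph, $A\subset V$ with $|A|$ even, $x_e>0$ and $p_e\in[0,1)$ for $e\in E$. Then for all $\omega\in\{0,1\}^E$, $$2^{|\omega|}(\ell^A_x\cup\mathbb{P}_p)[\omega]\propto\Big(\ell^A_{\frac{2x}{1+p}}\cup\mathbb{P}_{\frac{2p}{1+p}}\Big)[\omega].$$ In particular, if $J_e>0$ and $t_e=\tanh(J_e)$, then $2^{|\omega|}(\ell^A_t\cup\mathbb{P}_{t^2})[\omega]\propto\mathbf{P}^A_{2J}[\omega]$.
   Context: Configurations are identified with sets of open edges; $|\omega|$ is the number of open edges. $\partial F$ denotes the set of odd-degree vertices of $(V,F)$. For positive weights $y$, $\ell^A_y[\omega]\propto\prod_{e\in\omega}y_e\mathbf{1}[\partial\omega=A]$. $\mathbb{P}_r$ is Bernoulli percolation with edge $e$ open with probability $r_e$; vector operations are coordinatewise. $\pi\cup\nu$ is the law of the union of independent samples of $\pi,\nu$. $\mathbf{P}^A_{2J}$ is the single random current with sources $A$ and couplings $(2J_e)$: the law of $\{e:n_e>0\}$ for independent $n_e\sim$ Poisson$(2J_e)$ conditioned on the set of vertices $v$ with $\sum_{e\ni v}n_e$ odd being $A$. The proportionality is as functions of $\omega$ (both sides assumed defined). *)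

theory Defs
  imports "HOL-Probability.Probability"
begin

text \<open>A finite (multi)graph is given by a vertex set V, an edge set E and an
incidence map inc assigning to each edge its pair of endpoints.
Configurations are subsets of E (the open edges).\<close>

definition graph :: "'v set \<Rightarrow> 'e set \<Rightarrow> ('e \<Rightarrow> 'v \<times> 'v) \<Rightarrow> bool" where
  "graph V E inc \<longleftrightarrow> finite V \<and> finite E \<and>
     (\<forall>e\<in>E. fst (inc e) \<in> V \<and> snd (inc e) \<in> V \<and> fst (inc e) \<noteq> snd (inc e))"

definition mult :: "('e \<Rightarrow> 'v \<times> 'v) \<Rightarrow> 'e \<Rightarrow> 'v \<Rightarrow> nat" where
  "mult inc e v = (if fst (inc e) = v then 1 else 0) + (if snd (inc e) = v then 1 else 0)"

definition sources :: "'v set \<Rightarrow> 'e set \<Rightarrow> ('e \<Rightarrow> 'v \<times> 'v) \<Rightarrow> ('e \<Rightarrow> nat) \<Rightarrow> 'v set" where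
  "sources V E inc n = {v\<in>V. odd (\<Sum>e\<in>E. n e * mult inc e v)}"

definition bdry :: "'v set \<Rightarrow> 'e set \<Rightarrow> ('e \<Rightarrow> 'v \<times> 'v) \<Rightarrow> 'e set \<Rightarrow> 'v set" where
  "bdry V E inc F = sources V E inc (\<lambda>e. if e \<in> F then 1 else 0)"

definition loop_weight :: "'v set \<Rightarrow> 'e set \<Rightarrow> ('e \<Rightarrow> 'v \<times> 'v) \<Rightarrow> 'v set \<Rightarrow> ('e \<Rightarrow> real) \<Rightarrow> 'e set \<Rightarrow> real" where
  "loop_weight V E inc A y \<omega> = (if \<omega> \<subseteq> E \<and> bdry V E inc \<omega> = A then \<Prod>e\<in>\<omega>. y e else 0)"

definition loop_measure :: "'v set \<Rightarrow> 'e set \<Rightarrow> ('e \<Rightarrow> 'v \<times> 'v) \<Rightarrow> 'v set \<Rightarrow> ('e \<Rightarrow> real) \<Rightarrow> 'e set \<Rightarrow> real" where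
  "loop_measure V E inc A y \<omega> =
     loop_weight V E inc A y \<omega> / (\<Sum>F\<in>Pow E. loop_weight V E inc A y F)"

definition perc :: "'e set \<Rightarrow> ('e \<Rightarrow> real) \<Rightarrow> 'e set \<Rightarrow> real" where
  "perc E r \<omega> = (if \<omega> \<subseteq> E then (\<Prod>e\<in>\<omega>. r e) * (\<Prod>e\<in>E - \<omega>. 1 - r e) else 0)"

text \<open>Law of the union of independent samples of two laws on configurations.\<close>
definition union_law :: "'e set \<Rightarrow> ('e set \<Rightarrow> real) \<Rightarrow> ('e set \<Rightarrow> real) \<Rightarrow> 'e set \<Rightarrow> real" where
  "union_law E \<pi> \<nu> \<omega> = (\<Sum>a\<in>Pow E. \<Sum>b\<in>Pow E. if a \<union> b = \<omega> then \<pi> a * \<nu> b else 0)"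

definition random_current :: "'v set \<Rightarrow> 'e set \<Rightarrow> ('e \<Rightarrow> 'v \<times> 'v) \<Rightarrow> 'v set \<Rightarrow> ('e \<Rightarrow> real) \<Rightarrow> 'e set pmf" where
  "random_current V E inc A J =
     map_pmf (\<lambda>n. {e\<in>E. n e > 0})
       (cond_pmf (Pi_pmf E 0 (\<lambda>e. poisson_pmf (2 * J e))) {n. sources V E inc n = A})"

definition proportional :: "'e set \<Rightarrow> ('e set \<Rightarrow> real) \<Rightarrow> ('e set \<Rightarrow> real) \<Rightarrow> bool" where
  "proportional E f g \<longleftrightarrow> (\<exists>c>0. \<forall>\<omega>. \<omega> \<subseteq> E \<longrightarrow> f \<omega> = c * g \<omega>)"

end

(*
  Both sides are, up to normalisation, tricolour weights: sums over the decompositions of \<omega>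
  into a part a with \<partial>a = A and the rest \<omega> - a, with edge weights u on a, v on \<omega> - a and
  w on E - \<omega>. For \<ell>^A_x \<union> P_p these weights are (x, p, 1 - p), because the independent
  percolation sample must open \<omega> - a, may do anything on a, and must close E - \<omega>.
  Replacing (x, p) by (2x/(1+p), 2p/(1+p)) multiplies (u, v, w) edgewise by (2c, 2c, c) with
  c = 1/(1+p), which produces the factor 2^|\<omega>| and a global constant.
  A random current sees each Poisson(2J) count only through whether it is zero, odd, or even
  and positive, and its sources only through the odd edges. These three events have
  probabilities c(1 - t^2), 2ct and 2ct^2 with t = tanh J and c = (1 + e^(-2J))^2/4, so the
  current is the tricolour weight with (u, v, w) = (2ct, 2ct^2, c(1 - t^2)).
*)
theory Submission
  imports Defs
begin

definition tricolour_weight ::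
    "'v set \<Rightarrow> 'e set \<Rightarrow> ('e \<Rightarrow> 'v \<times> 'v) \<Rightarrow> 'v set \<Rightarrow>
     ('e \<Rightarrow> real) \<Rightarrow> ('e \<Rightarrow> real) \<Rightarrow> ('e \<Rightarrow> real) \<Rightarrow> 'e set \<Rightarrow> real" where
  "tricolour_weight V E inc A u v w \<omega> = (\<Sum>a\<in>{a\<in>Pow \<omega>. bdry V E inc a = A}.
      (\<Prod>e\<in>a. u e) * (\<Prod>e\<in>\<omega> - a. v e) * (\<Prod>e\<in>E - \<omega>. w e))"

lemma tricolour_weight_scale:
  assumes fin: "finite E" and \<omega>: "\<omega> \<subseteq> E"
    and scaled: "\<forall>e\<in>E. u' e = k e * c e * u e \<and> v' e = k e * c e * v e \<and> w' e = c e * w e"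
  shows "tricolour_weight V E inc A u' v' w' \<omega>
       = (\<Prod>e\<in>\<omega>. k e) * (\<Prod>e\<in>E. c e) * tricolour_weight V E inc A u v w \<omega>"
  unfolding tricolour_weight_def sum_distrib_left
proof (rule sum.cong[OF refl])
  fix a assume "a \<in> {a\<in>Pow \<omega>. bdry V E inc a = A}"
  then have a: "a \<subseteq> \<omega>" by auto
  have fin\<omega>: "finite \<omega>" using \<omega> fin by (rule finite_subset)
  have u': "(\<Prod>e\<in>a. u' e) = (\<Prod>e\<in>a. k e) * (\<Prod>e\<in>a. c e) * (\<Prod>e\<in>a. u e)"
    using a \<omega> scaled by (auto simp: prod.distrib[symmetric] intro!: prod.cong)
  have v': "(\<Prod>e\<in>\<omega> - a. v' e) = (\<Prod>e\<in>\<omega> - a. k e) * (\<Prod>e\<in>\<omega> - a. c e) * (\<Prod>e\<in>\<omega> - a. v e)"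
    using \<omega> scaled by (auto simp: prod.distrib[symmetric] intro!: prod.cong)
  have w': "(\<Prod>e\<in>E - \<omega>. w' e) = (\<Prod>e\<in>E - \<omega>. c e) * (\<Prod>e\<in>E - \<omega>. w e)"
    using scaled by (auto simp: prod.distrib[symmetric] intro!: prod.cong)
  have k: "(\<Prod>e\<in>\<omega>. k e) = (\<Prod>e\<in>\<omega> - a. k e) * (\<Prod>e\<in>a. k e)"
    by (rule prod.subset_diff[OF a fin\<omega>])
  have c: "(\<Prod>e\<in>E. c e) = (\<Prod>e\<in>E - \<omega>. c e) * ((\<Prod>e\<in>\<omega> - a. c e) * (\<Prod>e\<in>a. c e))"
    unfolding prod.subset_diff[OF \<omega> fin] prod.subset_diff[OF a fin\<omega>] ..
  show "(\<Prod>e\<in>a. u' e) * (\<Prod>e\<in>\<omega> - a. v' e) * (\<Prod>e\<in>E - \<omega>. w' e)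
      = (\<Prod>e\<in>\<omega>. k e) * (\<Prod>e\<in>E. c e) * ((\<Prod>e\<in>a. u e) * (\<Prod>e\<in>\<omega> - a. v e) * (\<Prod>e\<in>E - \<omega>. w e))"
    unfolding u' v' w' k c by (simp only: ac_simps)
qed

lemma perc_prob_union_eq:
  assumes fin: "finite E" and \<omega>: "\<omega> \<subseteq> E" and a: "a \<subseteq> \<omega>"
  shows "(\<Sum>b\<in>Pow E. if a \<union> b = \<omega> then perc E p b else 0)
       = (\<Prod>e\<in>\<omega> - a. p e) * (\<Prod>e\<in>E - \<omega>. 1 - p e)"
proof -
  have fin\<omega>: "finite \<omega>" using \<omega> fin by (rule finite_subset)
  have fina: "finite a" using a fin\<omega> by (rule finite_subset)
  let ?P = "(\<Prod>e\<in>\<omega> - a. p e) * (\<Prod>e\<in>E - \<omega>. 1 - p e)"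
  have solutions: "{b\<in>Pow E. a \<union> b = \<omega>} = (\<lambda>c. (\<omega> - a) \<union> c) ` Pow a"
  proof (intro equalityI subsetI)
    fix b assume "b \<in> {b\<in>Pow E. a \<union> b = \<omega>}"
    then have "b = (\<omega> - a) \<union> (b \<inter> a)" by auto
    then show "b \<in> (\<lambda>c. (\<omega> - a) \<union> c) ` Pow a" by blast
  next
    fix b assume "b \<in> (\<lambda>c. (\<omega> - a) \<union> c) ` Pow a"
    then show "b \<in> {b\<in>Pow E. a \<union> b = \<omega>}" using a \<omega> by auto
  qed
  have inj: "inj_on (\<lambda>c. (\<omega> - a) \<union> c) (Pow a)"
    by (rule inj_onI) auto
  have perc_split: "perc E p ((\<omega> - a) \<union> c) = ?P * ((\<Prod>e\<in>c. p e) * (\<Prod>e\<in>a - c. 1 - p e))"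
    if "c \<in> Pow a" for c
  proof -
    have c: "c \<subseteq> a" using that by simp
    have fin_c: "finite c" using c fina by (rule finite_subset)
    have open_split: "(\<Prod>e\<in>(\<omega> - a) \<union> c. p e) = (\<Prod>e\<in>\<omega> - a. p e) * (\<Prod>e\<in>c. p e)"
      by (rule prod.union_disjoint) (use fin\<omega> fin_c c in auto)
    have "E - ((\<omega> - a) \<union> c) = (E - \<omega>) \<union> (a - c)" using \<omega> a c by auto
    moreover have "(\<Prod>e\<in>(E - \<omega>) \<union> (a - c). 1 - p e) = (\<Prod>e\<in>E - \<omega>. 1 - p e) * (\<Prod>e\<in>a - c. 1 - p e)"
      by (rule prod.union_disjoint) (use fin fina a in auto)
    ultimately have closed_split:
      "(\<Prod>e\<in>E - ((\<omega> - a) \<union> c). 1 - p e) = (\<Prod>e\<in>E - \<omega>. 1 - p e) * (\<Prod>e\<in>a - c. 1 - p e)"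
      by simp
    have "(\<omega> - a) \<union> c \<subseteq> E" using \<omega> a c by auto
    then show ?thesis unfolding perc_def open_split closed_split by (simp only: if_True ac_simps)
  qed
  have "(\<Sum>b\<in>Pow E. if a \<union> b = \<omega> then perc E p b else 0) = (\<Sum>b\<in>{b\<in>Pow E. a \<union> b = \<omega>}. perc E p b)"
    using sum.inter_filter[of "Pow E" "perc E p" "\<lambda>b. a \<union> b = \<omega>"] fin by simp
  also have "\<dots> = (\<Sum>c\<in>Pow a. perc E p ((\<omega> - a) \<union> c))"
    unfolding solutions by (rule sum.reindex_cong[OF inj]) auto
  also have "\<dots> = (\<Sum>c\<in>Pow a. ?P * ((\<Prod>e\<in>c. p e) * (\<Prod>e\<in>a - c. 1 - p e)))"
    using perc_split by (rule sum.cong[OF refl])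
  also have "\<dots> = ?P * (\<Sum>c\<in>Pow a. (\<Prod>e\<in>c. p e) * (\<Prod>e\<in>a - c. 1 - p e))"
    by (rule sum_distrib_left[symmetric])
  also have "(\<Sum>c\<in>Pow a. (\<Prod>e\<in>c. p e) * (\<Prod>e\<in>a - c. 1 - p e)) = 1"
    using prod_add[OF fina, of p "\<lambda>e. 1 - p e"] by simp
  finally show ?thesis by simp
qed

lemma union_law_loop_perc:
  assumes fin: "finite E" and \<omega>: "\<omega> \<subseteq> E"
  shows "union_law E (loop_measure V E inc A y) (perc E p) \<omega>
       = tricolour_weight V E inc A y p (\<lambda>e. 1 - p e) \<omega> / (\<Sum>F\<in>Pow E. loop_weight V E inc A y F)"
proof -
  define Z where "Z = (\<Sum>F\<in>Pow E. loop_weight V E inc A y F)"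
  define X where "X = {a\<in>Pow \<omega>. bdry V E inc a = A}"
  define T where "T = (\<lambda>a. (\<Prod>e\<in>a. y e) * (\<Prod>e\<in>\<omega> - a. p e) * (\<Prod>e\<in>E - \<omega>. 1 - p e))"
  have summand: "(\<Sum>b\<in>Pow E. if a \<union> b = \<omega> then loop_measure V E inc A y a * perc E p b else 0)
      = (if a \<in> X then T a / Z else 0)" if aE: "a \<in> Pow E" for a
  proof -
    have "(\<Sum>b\<in>Pow E. if a \<union> b = \<omega> then loop_measure V E inc A y a * perc E p b else 0)
        = loop_measure V E inc A y a * (\<Sum>b\<in>Pow E. if a \<union> b = \<omega> then perc E p b else 0)"
      by (subst sum_distrib_left) (rule sum.cong, auto)
    also have "\<dots> = (if a \<in> X then T a / Z else 0)"
    proof (cases "a \<subseteq> \<omega>")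
      case True
      then show ?thesis
        using aE unfolding perc_prob_union_eq[OF fin \<omega> True] loop_measure_def loop_weight_def X_def T_def Z_def
        by auto
    next
      case False
      then have "(\<Sum>b\<in>Pow E. if a \<union> b = \<omega> then perc E p b else 0) = 0"
        by (intro sum.neutral) auto
      then show ?thesis using False unfolding X_def by auto
    qed
    finally show ?thesis .
  qed
  have "union_law E (loop_measure V E inc A y) (perc E p) \<omega> = (\<Sum>a\<in>Pow E. if a \<in> X then T a / Z else 0)"
    unfolding union_law_def using summand by (rule sum.cong[OF refl])
  also have "\<dots> = (\<Sum>a\<in>Pow E \<inter> X. T a / Z)"
    using fin by (simp add: sum.inter_restrict)
  also have "Pow E \<inter> X = X"
    using \<omega> unfolding X_def by auto
  finally show ?thesis
    unfolding tricolour_weight_def X_def T_def Z_def by (simp add: sum_divide_distrib)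
qed

lemma loop_partition_pos:
  assumes fin: "finite E" and sourced: "\<exists>F\<subseteq>E. bdry V E inc F = A" and y: "\<forall>e\<in>E. y e > 0"
  shows "(\<Sum>F\<in>Pow E. loop_weight V E inc A y F) > 0"
proof -
  obtain F where F: "F \<subseteq> E" "bdry V E inc F = A" using sourced by blast
  have nonneg: "loop_weight V E inc A y G \<ge> 0" if "G \<in> Pow E" for G
    using that y unfolding loop_weight_def by (auto intro!: prod_nonneg simp: less_imp_le subset_iff)
  have "0 < prod y F"
    using F y by (intro prod_pos) auto
  then have "0 < loop_weight V E inc A y F"
    using F unfolding loop_weight_def by simp
  also have "\<dots> \<le> (\<Sum>F\<in>Pow E. loop_weight V E inc A y F)"
    using F fin nonneg by (intro member_le_sum) auto
  finally show ?thesis .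
qed

lemma proportional_pow2_tricolour:
  assumes fin: "finite E" and Z: "Z > 0" and M: "M > 0" and c: "\<forall>e\<in>E. c e > 0"
    and scaled: "\<forall>e\<in>E. u' e = 2 * c e * u e \<and> v' e = 2 * c e * v e \<and> w' e = c e * w e"
    and f: "\<forall>\<omega>\<subseteq>E. f \<omega> = tricolour_weight V E inc A u v w \<omega> / Z"
    and g: "\<forall>\<omega>\<subseteq>E. g \<omega> = tricolour_weight V E inc A u' v' w' \<omega> / M"
  shows "proportional E (\<lambda>\<omega>. 2 ^ card \<omega> * f \<omega>) g"
proof -
  define C where "C = (\<Prod>e\<in>E. c e)"
  have C: "C > 0" unfolding C_def using c by (simp add: prod_pos)
  have "2 ^ card \<omega> * f \<omega> = M / (Z * C) * g \<omega>" if \<omega>: "\<omega> \<subseteq> E" for \<omega>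
  proof -
    have "tricolour_weight V E inc A u' v' w' \<omega> = 2 ^ card \<omega> * C * tricolour_weight V E inc A u v w \<omega>"
      using tricolour_weight_scale[OF fin \<omega>, of u' "\<lambda>_. 2" c u v' v w' w] scaled unfolding C_def by simp
    then show ?thesis using f g \<omega> Z M C by (simp add: field_simps)
  qed
  then show ?thesis
    unfolding proportional_def using Z M C by (intro exI[of _ "M / (Z * C)"]) auto
qed

lemma sources_cong_mod2:
  assumes "\<forall>e\<in>E. n e mod 2 = n' e mod 2"
  shows "sources V E inc n = sources V E inc n'"
proof -
  have "(\<Sum>e\<in>E. n e * mult inc e v) mod 2 = (\<Sum>e\<in>E. n' e * mult inc e v) mod 2" for v
  proof -
    have "(\<Sum>e\<in>E. n e * mult inc e v) mod 2 = (\<Sum>e\<in>E. (n e * mult inc e v) mod 2) mod 2"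
      by (simp add: mod_sum_eq)
    also have "(\<Sum>e\<in>E. (n e * mult inc e v) mod 2) = (\<Sum>e\<in>E. (n' e * mult inc e v) mod 2)"
      using assms by (intro sum.cong refl) (metis mod_mult_left_eq)
    also have "(\<Sum>e\<in>E. (n' e * mult inc e v) mod 2) mod 2 = (\<Sum>e\<in>E. n' e * mult inc e v) mod 2"
      by (simp add: mod_sum_eq)
    finally show ?thesis .
  qed
  then show ?thesis unfolding sources_def odd_iff_mod_2_eq_one by auto
qed

lemma poisson_prob_odd:
  assumes r: "r > 0"
  shows "measure_pmf.prob (poisson_pmf r) {k. odd k} = (1 - exp (-2 * r)) / 2"
proof -
  let ?p = "pmf (poisson_pmf r)"
  have odd_part: "(\<lambda>n. if n \<in> {k. odd k} then ?p n else 0) sums measure_pmf.prob (poisson_pmf r) {k. odd k}"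
    unfolding measure_pmf_conv_infsetsum by (rule sums_infsetsum_nat) auto
  have total: "?p sums 1"
    using sums_infsetsum_nat'[OF pmf_abs_summable[of "poisson_pmf r" UNIV]]
    by (simp add: infsetsum_pmf_eq_1)
  have alternating: "(\<lambda>n. exp (-r) * ((-r) ^ n /\<^sub>R fact n)) sums (exp (-r) * exp (-r))"
    by (rule sums_mult[OF exp_converges])
  \<comment> \<open>The signed series \<open>\<Sum> (-1)^n p_n = exp (-2r)\<close> cancels the even terms.\<close>
  have "(\<lambda>n. if n \<in> {k. odd k} then ?p n else 0) = (\<lambda>n. (?p n - exp (-r) * ((-r) ^ n /\<^sub>R fact n)) / 2)"
  proof
    fix n
    have "(-r) ^ n = (-1) ^ n * r ^ n" by (rule power_minus)
    then have "exp (-r) * ((-r) ^ n /\<^sub>R fact n) = (-1) ^ n * ?p n"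
      using r by (simp add: divide_inverse mult_ac)
    then show "(if n \<in> {k. odd k} then ?p n else 0) = (?p n - exp (-r) * ((-r) ^ n /\<^sub>R fact n)) / 2"
      by (cases "odd n") auto
  qed
  with odd_part have "(\<lambda>n. (?p n - exp (-r) * ((-r) ^ n /\<^sub>R fact n)) / 2)
      sums measure_pmf.prob (poisson_pmf r) {k. odd k}" by simp
  moreover have "(\<lambda>n. (?p n - exp (-r) * ((-r) ^ n /\<^sub>R fact n)) / 2) sums ((1 - exp (-r) * exp (-r)) / 2)"
    by (intro sums_divide sums_diff total alternating)
  ultimately have "measure_pmf.prob (poisson_pmf r) {k. odd k} = (1 - exp (-r) * exp (-r)) / 2"
    by (rule sums_unique2)
  then show ?thesis by (simp add: exp_add[symmetric])
qed

definition parity_class :: "nat \<Rightarrow> nat" where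
  "parity_class k = (if k = 0 then 0 else if odd k then 1 else 2)"

lemma parity_class_mod2: "parity_class k mod 2 = k mod 2"
  by (auto simp: parity_class_def mod2_eq_if)

lemma pmf_parity_class_poisson:
  assumes r: "r > 0"
  shows "pmf (map_pmf parity_class (poisson_pmf r)) 0 = exp (-r)"
    and "pmf (map_pmf parity_class (poisson_pmf r)) 1 = (1 - exp (-2 * r)) / 2"
    and "pmf (map_pmf parity_class (poisson_pmf r)) 2 = 1 - exp (-r) - (1 - exp (-2 * r)) / 2"
proof -
  let ?q = "pmf (map_pmf parity_class (poisson_pmf r))"
  have "parity_class -` {0} = {0}" "parity_class -` {1} = {k. odd k}"
    by (auto simp: parity_class_def split: if_splits intro: odd_pos)
  then show q0: "?q 0 = exp (-r)" and q1: "?q 1 = (1 - exp (-2 * r)) / 2"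
    using r poisson_prob_odd[OF r] by (simp_all add: pmf_map measure_pmf_single)
  have "set_pmf (map_pmf parity_class (poisson_pmf r)) \<subseteq> {0, 1, 2}"
    by (auto simp: parity_class_def)
  then have "?q 0 + ?q 1 + ?q 2 = 1"
    using sum_pmf_eq_1[of "{0, 1, 2}" "map_pmf parity_class (poisson_pmf r)"] by simp
  then show "?q 2 = 1 - exp (-r) - (1 - exp (-2 * r)) / 2"
    using q0 q1 by linarith
qed

lemma pmf_parity_class_poisson_tanh:
  fixes J :: real
  assumes J: "J > 0"
  defines "c \<equiv> (1 + exp (-2 * J))\<^sup>2 / 4"
  shows "pmf (map_pmf parity_class (poisson_pmf (2 * J))) 1 = 2 * c * tanh J"
    and "pmf (map_pmf parity_class (poisson_pmf (2 * J))) 2 = 2 * c * (tanh J)\<^sup>2"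
    and "pmf (map_pmf parity_class (poisson_pmf (2 * J))) 0 = c * (1 - (tanh J)\<^sup>2)"
proof -
  define w where "w = exp (-2 * J)"
  have "exp (- (2 * J)) = w" "exp (-2 * (2 * J)) = w * w"
    unfolding w_def by (simp_all add: exp_add[symmetric])
  then have q: "pmf (map_pmf parity_class (poisson_pmf (2 * J))) 0 = w"
    "pmf (map_pmf parity_class (poisson_pmf (2 * J))) 1 = (1 - w * w) / 2"
    "pmf (map_pmf parity_class (poisson_pmf (2 * J))) 2 = 1 - w - (1 - w * w) / 2"
    using pmf_parity_class_poisson[of "2 * J"] J by simp_all
  have "w > 0" unfolding w_def by simp
  then have hs: "(1 + w) * tanh J = 1 - w"
    unfolding tanh_real_altdef w_def[symmetric] by simp
  have scaled: "2 * c * tanh J = ((1 + w) * tanh J) * (1 + w) / 2"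
    "2 * c * (tanh J)\<^sup>2 = ((1 + w) * tanh J)\<^sup>2 / 2"
    "c * (1 - (tanh J)\<^sup>2) = ((1 + w)\<^sup>2 - ((1 + w) * tanh J)\<^sup>2) / 4"
    unfolding c_def w_def[symmetric] by (simp_all add: power2_eq_square algebra_simps)
  show "pmf (map_pmf parity_class (poisson_pmf (2 * J))) 1 = 2 * c * tanh J"
    and "pmf (map_pmf parity_class (poisson_pmf (2 * J))) 2 = 2 * c * (tanh J)\<^sup>2"
    and "pmf (map_pmf parity_class (poisson_pmf (2 * J))) 0 = c * (1 - (tanh J)\<^sup>2)"
    unfolding q scaled hs by (simp_all add: power2_eq_square field_simps)
qed

definition parity_counts :: "'e set \<Rightarrow> ('e \<Rightarrow> real) \<Rightarrow> ('e \<Rightarrow> nat) pmf" where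
  "parity_counts E J = Pi_pmf E 0 (\<lambda>e. map_pmf parity_class (poisson_pmf (2 * J e)))"

lemma set_pmf_parity_counts:
  assumes fin: "finite E" and J: "\<forall>e\<in>E. J e > 0"
  shows "set_pmf (parity_counts E J) = PiE_dflt E 0 (\<lambda>_. {0, 1, 2})"
proof -
  have "range parity_class = {0, 1, 2}"
  proof (intro equalityI subsetI)
    fix k :: nat assume "k \<in> {0, 1, 2}"
    then have "parity_class k = k" by (auto simp: parity_class_def)
    then show "k \<in> range parity_class" by (metis rangeI)
  qed (auto simp: parity_class_def)
  then show ?thesis
    using J unfolding parity_counts_def set_Pi_pmf[OF fin] PiE_dflt_def by auto
qed

lemma parity_counts_meets_sources:
  assumes fin: "finite E" and sourced: "\<exists>F\<subseteq>E. bdry V E inc F = A" and J: "\<forall>e\<in>E. J e > 0"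
  shows "set_pmf (parity_counts E J) \<inter> {n. sources V E inc n = A} \<noteq> {}"
proof -
  obtain F where F: "F \<subseteq> E" "bdry V E inc F = A" using sourced by blast
  have "(\<lambda>e. if e \<in> F then 1 else 0) \<in> set_pmf (parity_counts E J)"
    using F(1) unfolding set_pmf_parity_counts[OF fin J] PiE_dflt_def by auto
  moreover have "(\<lambda>e. if e \<in> F then 1 else 0) \<in> {n. sources V E inc n = A}"
    using F(2) unfolding bdry_def by simp
  ultimately show ?thesis by blast
qed

lemma random_current_eq_parity_counts:
  assumes fin: "finite E" and sourced: "\<exists>F\<subseteq>E. bdry V E inc F = A" and J: "\<forall>e\<in>E. J e > 0"
  shows "random_current V E inc A J
       = map_pmf (\<lambda>n. {e\<in>E. n e > 0}) (cond_pmf (parity_counts E J) {n. sources V E inc n = A})"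
proof -
  define P where "P = Pi_pmf E 0 (\<lambda>e. poisson_pmf (2 * J e))"
  define support where "support = (\<lambda>n. {e\<in>E. n e > (0::nat)})"
  define S where "S = {n. sources V E inc n = A}"
  have counts: "parity_counts E J = map_pmf ((\<circ>) parity_class) P"
    unfolding parity_counts_def P_def by (rule Pi_pmf_map) (simp_all add: fin parity_class_def)
  have sources_parity: "(\<circ>) parity_class -` S = S"
    using sources_cong_mod2[of E "parity_class \<circ> _" _ V inc] unfolding S_def
    by (auto simp: parity_class_mod2)
  have support_parity: "support \<circ> (\<circ>) parity_class = support"
    by (auto simp: support_def parity_class_def fun_eq_iff)
  have "set_pmf (map_pmf ((\<circ>) parity_class) P) \<inter> S \<noteq> {}"
    using parity_counts_meets_sources[OF fin sourced J] unfolding counts S_def .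
  then have nonempty: "set_pmf P \<inter> (\<circ>) parity_class -` S \<noteq> {}"
    by auto
  have "map_pmf support (cond_pmf (parity_counts E J) S)
      = map_pmf support (map_pmf ((\<circ>) parity_class) (cond_pmf P S))"
    unfolding counts cond_map_pmf[OF nonempty] sources_parity ..
  also have "\<dots> = map_pmf support (cond_pmf P S)"
    by (simp add: pmf.map_comp support_parity)
  finally show ?thesis
    unfolding random_current_def P_def S_def support_def ..
qed

definition colouring :: "'e set \<Rightarrow> 'e set \<Rightarrow> 'e \<Rightarrow> nat" where
  "colouring \<omega> a e = (if e \<in> a then 1 else if e \<in> \<omega> then 2 else 0)"

lemma bij_betw_colouring:
  assumes \<omega>: "\<omega> \<subseteq> E"
  shows "bij_betw (colouring \<omega>) {a\<in>Pow \<omega>. bdry V E inc a = A}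
           {n\<in>PiE_dflt E 0 (\<lambda>_. {0, 1, 2}). {e\<in>E. n e > 0} = \<omega> \<and> sources V E inc n = A}"
proof (rule bij_betw_byWitness[where f' = "\<lambda>n. {e\<in>E. n e = 1}"])
  have sources_colouring: "sources V E inc (colouring \<omega> a) = bdry V E inc a" for a
    unfolding bdry_def by (rule sources_cong_mod2) (auto simp: colouring_def)
  show "\<forall>a\<in>{a\<in>Pow \<omega>. bdry V E inc a = A}. {e\<in>E. colouring \<omega> a e = 1} = a"
    using \<omega> by (auto simp: colouring_def)
  show "colouring \<omega> ` {a\<in>Pow \<omega>. bdry V E inc a = A}
      \<subseteq> {n\<in>PiE_dflt E 0 (\<lambda>_. {0, 1, 2}). {e\<in>E. n e > 0} = \<omega> \<and> sources V E inc n = A}"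
    using \<omega> sources_colouring by (auto simp: colouring_def PiE_dflt_def split: if_splits)
  show "\<forall>n\<in>{n\<in>PiE_dflt E 0 (\<lambda>_. {0, 1, 2}). {e\<in>E. n e > 0} = \<omega> \<and> sources V E inc n = A}.
      colouring \<omega> {e\<in>E. n e = 1} = n"
  proof
    fix n assume n: "n \<in> {n\<in>PiE_dflt E 0 (\<lambda>_. {0, 1, 2}). {e\<in>E. n e > 0} = \<omega> \<and> sources V E inc n = A}"
    show "colouring \<omega> {e\<in>E. n e = 1} = n"
    proof
      fix e show "colouring \<omega> {e\<in>E. n e = 1} e = n e"
        using n \<omega> unfolding colouring_def PiE_dflt_def by (cases "e \<in> E") auto
    qed
  qed
  show "(\<lambda>n. {e\<in>E. n e = 1}) ` {n\<in>PiE_dflt E 0 (\<lambda>_. {0, 1, 2}). {e\<in>E. n e > 0} = \<omega> \<and> sources V E inc n = A}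
      \<subseteq> {a\<in>Pow \<omega>. bdry V E inc a = A}"
  proof
    fix a assume "a \<in> (\<lambda>n. {e\<in>E. n e = 1}) `
        {n\<in>PiE_dflt E 0 (\<lambda>_. {0, 1, 2}). {e\<in>E. n e > 0} = \<omega> \<and> sources V E inc n = A}"
    then obtain n where n: "n \<in> PiE_dflt E 0 (\<lambda>_. {0, 1, 2})" "{e\<in>E. n e > 0} = \<omega>"
      "sources V E inc n = A" and a: "a = {e\<in>E. n e = 1}" by auto
    have "bdry V E inc a = sources V E inc n"
      unfolding bdry_def a using n(1) by (intro sources_cong_mod2) (auto simp: PiE_dflt_def)
    then show "a \<in> {a\<in>Pow \<omega>. bdry V E inc a = A}" using n(2,3) a by auto
  qed
qed

lemma prod_colouring:
  assumes fin: "finite E" and \<omega>: "\<omega> \<subseteq> E" and a: "a \<subseteq> \<omega>"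
  shows "(\<Prod>e\<in>E. q (colouring \<omega> a e) e) = (\<Prod>e\<in>a. q 1 e) * (\<Prod>e\<in>\<omega> - a. q 2 e) * (\<Prod>e\<in>E - \<omega>. q 0 e)"
proof -
  have fin\<omega>: "finite \<omega>" using \<omega> fin by (rule finite_subset)
  have "(\<Prod>e\<in>E. q (colouring \<omega> a e) e)
      = (\<Prod>e\<in>E - \<omega>. q (colouring \<omega> a e) e) * ((\<Prod>e\<in>\<omega> - a. q (colouring \<omega> a e) e) * (\<Prod>e\<in>a. q (colouring \<omega> a e) e))"
    unfolding prod.subset_diff[OF \<omega> fin] prod.subset_diff[OF a fin\<omega>] ..
  also have "\<dots> = (\<Prod>e\<in>E - \<omega>. q 0 e) * ((\<Prod>e\<in>\<omega> - a. q 2 e) * (\<Prod>e\<in>a. q 1 e))"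
    using a by (intro arg_cong2[where f = "(*)"] prod.cong) (auto simp: colouring_def)
  finally show ?thesis by (simp only: ac_simps)
qed

lemma measure_pmf_eq_sum_Int:
  assumes "set_pmf p \<subseteq> K" and "finite K"
  shows "measure_pmf.prob p X = sum (pmf p) (K \<inter> X)"
proof -
  have "measure_pmf.prob p X = measure_pmf.prob p (K \<inter> X)"
    using assms(1) by (intro measure_pmf.finite_measure_eq_AE) (auto simp: AE_measure_pmf_iff)
  also have "\<dots> = sum (pmf p) (K \<inter> X)"
    using assms(2) by (simp add: measure_measure_pmf_finite)
  finally show ?thesis .
qed

lemma pmf_random_current:
  assumes fin: "finite E" and sourced: "\<exists>F\<subseteq>E. bdry V E inc F = A" and J: "\<forall>e\<in>E. J e > 0"
    and \<omega>: "\<omega> \<subseteq> E"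
  defines "q \<equiv> \<lambda>k e. pmf (map_pmf parity_class (poisson_pmf (2 * J e))) k"
  shows "pmf (random_current V E inc A J) \<omega>
       = tricolour_weight V E inc A (q 1) (q 2) (q 0) \<omega>
         / measure_pmf.prob (parity_counts E J) {n. sources V E inc n = A}"
proof -
  define S where "S = {n. sources V E inc n = A}"
  define M where "M = measure_pmf.prob (parity_counts E J) S"
  define T where "T = PiE_dflt E 0 (\<lambda>_. {0, 1, 2::nat})"
  define coloured where "coloured = {n\<in>T. {e\<in>E. n e > 0} = \<omega> \<and> sources V E inc n = A}"
  have set_counts: "set_pmf (parity_counts E J) = T"
    unfolding T_def by (rule set_pmf_parity_counts[OF fin J])
  have nonempty: "set_pmf (parity_counts E J) \<inter> S \<noteq> {}"
    unfolding S_def by (rule parity_counts_meets_sources[OF fin sourced J])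
  have "set_pmf (cond_pmf (parity_counts E J) S) \<subseteq> T \<inter> S"
    using set_cond_pmf[OF nonempty] set_counts by blast
  moreover have "finite (T \<inter> S)"
    unfolding T_def using fin by blast
  ultimately have "measure_pmf.prob (cond_pmf (parity_counts E J) S) ((\<lambda>n. {e\<in>E. n e > 0}) -` {\<omega>})
      = sum (pmf (cond_pmf (parity_counts E J) S)) (T \<inter> S \<inter> (\<lambda>n. {e\<in>E. n e > 0}) -` {\<omega>})"
    by (rule measure_pmf_eq_sum_Int)
  also have "T \<inter> S \<inter> (\<lambda>n. {e\<in>E. n e > 0}) -` {\<omega>} = coloured"
    unfolding coloured_def S_def by auto
  finally have "measure_pmf.prob (cond_pmf (parity_counts E J) S) ((\<lambda>n. {e\<in>E. n e > 0}) -` {\<omega>})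
      = sum (pmf (cond_pmf (parity_counts E J) S)) coloured" .
  then have "pmf (random_current V E inc A J) \<omega> = sum (pmf (cond_pmf (parity_counts E J) S)) coloured"
    unfolding random_current_eq_parity_counts[OF fin sourced J] pmf_map S_def .
  also have "\<dots> = (\<Sum>n\<in>coloured. pmf (parity_counts E J) n / M)"
    using nonempty by (intro sum.cong refl) (auto simp: pmf_cond M_def coloured_def S_def)
  also have "\<dots> = (\<Sum>a\<in>{a\<in>Pow \<omega>. bdry V E inc a = A}. pmf (parity_counts E J) (colouring \<omega> a) / M)"
    unfolding coloured_def T_def using bij_betw_colouring[OF \<omega>] by (rule sum.reindex_bij_betw[symmetric])
  also have "\<dots> = tricolour_weight V E inc A (q 1) (q 2) (q 0) \<omega> / M"
    unfolding tricolour_weight_def sum_divide_distrib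
  proof (intro sum.cong refl arg_cong2[where f = "(/)"])
    fix a assume "a \<in> {a\<in>Pow \<omega>. bdry V E inc a = A}"
    then have a: "a \<subseteq> \<omega>" by simp
    have "pmf (parity_counts E J) (colouring \<omega> a) = (\<Prod>e\<in>E. q (colouring \<omega> a e) e)"
      unfolding parity_counts_def q_def using \<omega> a by (subst pmf_Pi') (auto simp: fin colouring_def)
    then show "pmf (parity_counts E J) (colouring \<omega> a) = (\<Prod>e\<in>a. q 1 e) * (\<Prod>e\<in>\<omega> - a. q 2 e) * (\<Prod>e\<in>E - \<omega>. q 0 e)"
      using prod_colouring[OF fin \<omega> a] by simp
  qed
  finally show ?thesis unfolding M_def S_def .
qed

lemma proportional_union_loop_perc_rescaled:
  assumes fin: "finite E" and sourced: "\<exists>F\<subseteq>E. bdry V E inc F = A"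
    and x: "\<forall>e\<in>E. x e > 0" and p: "\<forall>e\<in>E. 0 \<le> p e \<and> p e < 1"
  shows "proportional E
           (\<lambda>\<omega>. 2 ^ card \<omega> * union_law E (loop_measure V E inc A x) (perc E p) \<omega>)
           (union_law E (loop_measure V E inc A (\<lambda>e. 2 * x e / (1 + p e)))
                        (perc E (\<lambda>e. 2 * p e / (1 + p e))))"
proof -
  have p1: "\<forall>e\<in>E. 1 + p e > 0" using p by force
  have rescaled: "\<forall>e\<in>E. 2 * x e / (1 + p e) = 2 * (1 / (1 + p e)) * x e
      \<and> 2 * p e / (1 + p e) = 2 * (1 / (1 + p e)) * p e
      \<and> 1 - 2 * p e / (1 + p e) = 1 / (1 + p e) * (1 - p e)"
  proof
    fix e assume "e \<in> E"
    then have "1 + p e > 0" using p1 by blast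
    then show "2 * x e / (1 + p e) = 2 * (1 / (1 + p e)) * x e
        \<and> 2 * p e / (1 + p e) = 2 * (1 / (1 + p e)) * p e
        \<and> 1 - 2 * p e / (1 + p e) = 1 / (1 + p e) * (1 - p e)"
      by (simp add: field_simps)
  qed
  have Z: "(\<Sum>F\<in>Pow E. loop_weight V E inc A x F) > 0"
    by (rule loop_partition_pos[OF fin sourced x])
  have Z': "(\<Sum>F\<in>Pow E. loop_weight V E inc A (\<lambda>e. 2 * x e / (1 + p e)) F) > 0"
    using x p1 by (intro loop_partition_pos[OF fin sourced]) simp
  have c: "\<forall>e\<in>E. 1 / (1 + p e) > 0" using p1 by simp
  show ?thesis
    by (rule proportional_pow2_tricolour[where V = V and inc = inc and A = A, OF fin Z Z' c rescaled])
       (simp_all add: union_law_loop_perc[OF fin])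
qed

lemma proportional_union_loop_perc_random_current:
  assumes fin: "finite E" and sourced: "\<exists>F\<subseteq>E. bdry V E inc F = A" and J: "\<forall>e\<in>E. J e > 0"
  shows "proportional E
           (\<lambda>\<omega>. 2 ^ card \<omega> * union_law E (loop_measure V E inc A (\<lambda>e. tanh (J e)))
                                  (perc E (\<lambda>e. (tanh (J e))\<^sup>2)) \<omega>)
           (\<lambda>\<omega>. pmf (random_current V E inc A J) \<omega>)"
proof -
  have current_weights: "\<forall>e\<in>E. pmf (map_pmf parity_class (poisson_pmf (2 * J e))) 1
        = 2 * ((1 + exp (-2 * J e))\<^sup>2 / 4) * tanh (J e)
      \<and> pmf (map_pmf parity_class (poisson_pmf (2 * J e))) 2
        = 2 * ((1 + exp (-2 * J e))\<^sup>2 / 4) * (tanh (J e))\<^sup>2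
      \<and> pmf (map_pmf parity_class (poisson_pmf (2 * J e))) 0
        = (1 + exp (-2 * J e))\<^sup>2 / 4 * (1 - (tanh (J e))\<^sup>2)"
    using J pmf_parity_class_poisson_tanh by blast
  have Z: "(\<Sum>F\<in>Pow E. loop_weight V E inc A (\<lambda>e. tanh (J e)) F) > 0"
    using J by (intro loop_partition_pos[OF fin sourced]) simp
  have M: "measure_pmf.prob (parity_counts E J) {n. sources V E inc n = A} > 0"
    using parity_counts_meets_sources[OF fin sourced J] by (auto intro: measure_pmf_posI)
  have c: "\<forall>e\<in>E. (1 + exp (-2 * J e))\<^sup>2 / 4 > 0"
    by (intro ballI divide_pos_pos zero_less_power add_pos_pos) simp_all
  show ?thesis
    by (rule proportional_pow2_tricolour[where V = V and inc = inc and A = A, OF fin Z M c current_weights])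
       (simp_all add: union_law_loop_perc[OF fin] pmf_random_current[OF fin sourced J])
qed

theorem lemmaA2:
  fixes V :: "'v set" and E :: "'e set" and inc :: "'e \<Rightarrow> 'v \<times> 'v"
    and A :: "'v set" and x p :: "'e \<Rightarrow> real"
  assumes G: "graph V E inc"
    and A: "A \<subseteq> V" "even (card A)"
    and defined: "\<exists>F\<subseteq>E. bdry V E inc F = A"
    and x: "\<forall>e\<in>E. x e > 0"
    and p: "\<forall>e\<in>E. 0 \<le> p e \<and> p e < 1"
  shows "proportional E
           (\<lambda>\<omega>. 2 ^ card \<omega> * union_law E (loop_measure V E inc A x) (perc E p) \<omega>)
           (union_law E (loop_measure V E inc A (\<lambda>e. 2 * x e / (1 + p e)))
                        (perc E (\<lambda>e. 2 * p e / (1 + p e))))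
       \<and> (\<forall>J :: 'e \<Rightarrow> real. (\<forall>e\<in>E. J e > 0) \<longrightarrow>
            proportional E
              (\<lambda>\<omega>. 2 ^ card \<omega> * union_law E (loop_measure V E inc A (\<lambda>e. tanh (J e)))
                                     (perc E (\<lambda>e. (tanh (J e))\<^sup>2)) \<omega>)
              (\<lambda>\<omega>. pmf (random_current V E inc A J) \<omega>))"
proof -
  have fin: "finite E" using G unfolding graph_def by blast
  show ?thesis
    using proportional_union_loop_perc_rescaled[OF fin defined x p]
      proportional_union_loop_perc_random_current[OF fin defined] by blast
qed

end
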